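(* Let $\alpha\in(0,1)$ be irrational, and for $k\ge1$ write the $k$-th matrix of the Minkowski chain of $\alpha$ (case $n=1$) as $$B_k=\begin{pmatrix} q & -p\\ q' & -p'\end{pmatrix}.$$ Then the $k$-th pair in the Hurwitz chain of $\alpha$ is either $(\tfrac{p}{q},\tfrac{p'}{q'})$ or $(\tfrac{p'}{q'},\tfrac{p}{q})$.
   Context: Farey sets: for $m\in\mathbb{Z}^+$, $\mathcal{F}_m$ is the set of rationals in $[0,1]$ (in lowest terms) with denominator at most $m$, in increasing order. Hurwitz chain: for each $m$ let $(\tfrac{p}{q},\tfrac{p'}{q'})$ be the unique pair of successive elements of $\mathcal{F}_m$ with $\tfrac pq<\alpha<\tfrac{p'}{q'}$; the Hurwitz chain of $\alpha$ is the sequence of distinct such pairs as $m=1,2,3,\dots$, in order of appearance (first pair $(\tfrac01,\tfrac11)$). Minkowski chain (general definition, here used with $n=1$, $\alpha_1=\alpha$): Let $n\ge1$, $\ell=n+1$, $(\alpha_1,\dots,\alpha_n)\in\mathbb{R}^n$ with $\alpha_1,\dots,\alpha_n,1$ linearly independent over $\mathbb{Q}$. For $r=(r_1,\dots,r_\ell)\in\mathbb{Z}^\ell$ put $\xi(r)=r_1\alpha_1+\cdots+r_n\alpha_n+r_\ell$. For a real matrix or vector, $\|\cdot\|_\infty$ is the maximum absolute value of its entries. For $m\in\mathbb{Z}^+$, $A_m$ is the nonsingular integral $\ell\times\ell$ matrix with rows $w_1,\dots,w_\ell$ chosen successively: $w_i$ is the vector $w\in\mathbb{Z}^\ell$ with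 $\|w\|_\infty\le m$, linearly independent of $w_1,\dots,w_{i-1}$, minimizing $|\xi(w)|$, normalized so that its first nonzero entry is positive (this is unique by the linear independence hypothesis). Write $\beta_i=\xi(w_i)$, i.e. $A_m(\alpha_1,\dots,\alpha_n,1)^\top=(\beta_1,\dots,\beta_\ell)^\top$, so $0<|\beta_1|<\cdots<|\beta_\ell|$. The Minkowski chain $B_1,B_2,\dots$ is the sequence of distinct matrices among $A_1,A_2,A_3,\dots$ in order of appearance ($B_1=A_1$). *)

theory Defs
  imports Complex_Main "HOL-Library.Infinite_Set"
begin

definition new_indices :: "(nat \<Rightarrow> 'a) \<Rightarrow> nat set" where
  "new_indices f = {m. 1 \<le> m \<and> f m \<notin> f ` {1..<m}}"

definition distinct_chain :: "(nat \<Rightarrow> 'a) \<Rightarrow> nat \<Rightarrow> 'a" where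
  "distinct_chain f k = f (enumerate (new_indices f) (k - 1))"

definition farey :: "nat \<Rightarrow> rat set" where
  "farey m = {r. 0 \<le> r \<and> r \<le> 1 \<and> snd (quotient_of r) \<le> int m}"

definition hurwitz_pair :: "real \<Rightarrow> nat \<Rightarrow> rat \<times> rat" where
  "hurwitz_pair \<alpha> m = (THE (a, b). a \<in> farey m \<and> b \<in> farey m \<and>
      of_rat a < \<alpha> \<and> \<alpha> < of_rat b \<and> \<not> (\<exists>c \<in> farey m. a < c \<and> c < b))"

definition hurwitz_chain :: "real \<Rightarrow> nat \<Rightarrow> rat \<times> rat" where
  "hurwitz_chain \<alpha> = distinct_chain (hurwitz_pair \<alpha>)"

text \<open>Vectors of Z^2 are pairs (r1, r2); xi(r) = r1 * alpha + r2.
  A 2x2 integral matrix is represented by the pair of its rows (w1, w2).\<close>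

definition xi :: "real \<Rightarrow> int \<times> int \<Rightarrow> real" where
  "xi \<alpha> r = of_int (fst r) * \<alpha> + of_int (snd r)"

definition sup_norm_le :: "int \<times> int \<Rightarrow> nat \<Rightarrow> bool" where
  "sup_norm_le w m \<longleftrightarrow> \<bar>fst w\<bar> \<le> int m \<and> \<bar>snd w\<bar> \<le> int m"

definition first_nonzero_pos :: "int \<times> int \<Rightarrow> bool" where
  "first_nonzero_pos w \<longleftrightarrow> fst w > 0 \<or> (fst w = 0 \<and> snd w > 0)"

definition mink_min :: "real \<Rightarrow> nat \<Rightarrow> (int \<times> int \<Rightarrow> bool) \<Rightarrow> int \<times> int" where
  "mink_min \<alpha> m P = (THE w. P w \<and> sup_norm_le w m \<and> first_nonzero_pos w \<and>
      (\<forall>v. P v \<and> sup_norm_le v m \<longrightarrow> \<bar>xi \<alpha> w\<bar> \<le> \<bar>xi \<alpha> v\<bar>))"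

text \<open>Linear independence: {w} independent iff w \<noteq> 0; {w1, w} independent iff det \<noteq> 0.\<close>
definition mink_w1 :: "real \<Rightarrow> nat \<Rightarrow> int \<times> int" where
  "mink_w1 \<alpha> m = mink_min \<alpha> m (\<lambda>w. w \<noteq> (0, 0))"

definition mink_w2 :: "real \<Rightarrow> nat \<Rightarrow> int \<times> int" where
  "mink_w2 \<alpha> m = (let w1 = mink_w1 \<alpha> m in
      mink_min \<alpha> m (\<lambda>w. fst w1 * snd w - snd w1 * fst w \<noteq> 0))"

definition mink_A :: "real \<Rightarrow> nat \<Rightarrow> (int \<times> int) \<times> (int \<times> int)" where
  "mink_A \<alpha> m = (mink_w1 \<alpha> m, mink_w2 \<alpha> m)"

definition minkowski_chain :: "real \<Rightarrow> nat \<Rightarrow> (int \<times> int) \<times> (int \<times> int)" where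
  "minkowski_chain \<alpha> = distinct_chain (mink_A \<alpha>)"

end

theory Submission
  imports Defs
begin

text \<open>For every level m, the Farey neighbours a/b < \<alpha> < c/d in F_m satisfy
  bc - ad = 1 and b, d \<le> m < b + d; they are obtained from 0/1, 1/1 by repeatedly
  replacing one endpoint by the mediant. The rows (b, -a) and (d, -c) form a unimodular
  basis of \<int>^2, and in this basis a vector of sup norm at most m cannot have two
  coordinates of the same strict sign (that would force its first entry to exceed
  b + d > m in absolute value). Since \<xi>(b, -a) > 0 > \<xi>(d, -c), |\<xi>| of such a vector is
  then a nonnegative combination of |\<xi>(b, -a)| and |\<xi>(d, -c)| with integer coefficients,
  so these two rows are exactly the successive minima chosen by the Minkowski matrix A_m.
  Hence A_m and the Hurwitz pair of level m are both injective functions of the same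
  bracket, so the two chains change at the same levels.\<close>

definition farey_bracket :: "real \<Rightarrow> nat \<Rightarrow> int \<Rightarrow> int \<Rightarrow> int \<Rightarrow> int \<Rightarrow> bool" where
  "farey_bracket \<alpha> m a b c d \<longleftrightarrow> b * c - a * d = 1
     \<and> 0 \<le> a \<and> a \<le> b \<and> 0 \<le> c \<and> c \<le> d \<and> 1 \<le> b \<and> 1 \<le> d
     \<and> b \<le> int m \<and> d \<le> int m \<and> int m < b + d
     \<and> of_int a < of_int b * \<alpha> \<and> of_int d * \<alpha> < of_int c"

lemma of_int_mult_irrational_neq:
  assumes "\<alpha> \<notin> \<rat>" and "n \<noteq> 0"
  shows "of_int n * \<alpha> \<noteq> of_int z"
proof
  assume "of_int n * \<alpha> = of_int z"
  then have "\<alpha> = of_int z / of_int n" using assms(2) by (simp add: field_simps)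
  with assms(1) show False by simp
qed

lemma farey_bracket_exists:
  assumes "0 < \<alpha>" "\<alpha> < 1" "\<alpha> \<notin> \<rat>" "1 \<le> m"
  shows "\<exists>a b c d. farey_bracket \<alpha> m a b c d"
  using assms(4)
proof (induction m rule: nat_induct_at_least)
  case base
  have "farey_bracket \<alpha> 1 0 1 1 1" using assms by (simp add: farey_bracket_def)
  then show ?case by blast
next
  case (Suc m)
  then obtain a b c d where br: "farey_bracket \<alpha> m a b c d" by blast
  show ?case
  proof (cases "int (Suc m) < b + d")
    case True
    then have "farey_bracket \<alpha> (Suc m) a b c d" using br by (auto simp: farey_bracket_def)
    then show ?thesis by blast
  next
    case False
    then have bd: "b + d = int (Suc m)" using br by (auto simp: farey_bracket_def)
    have det: "b * (a + c) - a * (b + d) = 1" "(b + d) * c - (a + c) * d = 1"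
      using br by (simp_all add: farey_bracket_def algebra_simps)
    have "of_int (b + d) * \<alpha> \<noteq> of_int (a + c)"
      using br by (intro of_int_mult_irrational_neq assms(3)) (simp add: farey_bracket_def)
    then consider "of_int (b + d) * \<alpha> < of_int (a + c)" | "of_int (a + c) < of_int (b + d) * \<alpha>"
      by linarith
    then show ?thesis
    proof cases
      case 1
      then have "farey_bracket \<alpha> (Suc m) a b (a + c) (b + d)"
        using br bd det by (auto simp: farey_bracket_def)
      then show ?thesis by blast
    next
      case 2
      then have "farey_bracket \<alpha> (Suc m) (a + c) (b + d) c d"
        using br bd det by (auto simp: farey_bracket_def)
      then show ?thesis by blast
    qed
  qed
qed

lemma unimodular_imp_coprime:
  fixes a b c d :: "'a :: {comm_ring_1, algebraic_semidom}"
  assumes "b * c - a * d = 1"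
  shows "coprime a b" and "coprime c d"
proof -
  show "coprime a b"
  proof (rule coprimeI)
    fix g assume "g dvd a" "g dvd b"
    then have "g dvd b * c - a * d" by simp
    then show "is_unit g" using assms by simp
  qed
  show "coprime c d"
  proof (rule coprimeI)
    fix g assume "g dvd c" "g dvd d"
    then have "g dvd b * c - a * d" by simp
    then show "is_unit g" using assms by simp
  qed
qed

lemma quotient_of_int_fraction:
  assumes "0 < b" "coprime a b"
  shows "quotient_of (of_int a / of_int b) = (a, b)"
  using assms by (simp add: Fract_of_int_quotient[symmetric] quotient_of_Fract)

lemma farey_bracket_quotient_of:
  assumes "farey_bracket \<alpha> m a b c d"
  shows "quotient_of (of_int a / of_int b) = (a, b)"
    and "quotient_of (of_int c / of_int d) = (c, d)"
  using assms unimodular_imp_coprime[of b c a d]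
  by (auto simp: farey_bracket_def intro: quotient_of_int_fraction)

lemma farey_bracket_in_farey:
  assumes "farey_bracket \<alpha> m a b c d"
  shows "of_int a / of_int b \<in> farey m" and "of_int c / of_int d \<in> farey m"
  using assms farey_bracket_quotient_of[OF assms]
  by (auto simp: farey_def farey_bracket_def)

text \<open>If u/v lies strictly between a/b and c/d then v = b(cv - du) + d(bu - av) \<ge> b + d.\<close>
lemma farey_bracket_no_farey_between:
  assumes br: "farey_bracket \<alpha> m a b c d" and r: "r \<in> farey m"
    and "of_int a / of_int b < r" and "r < of_int c / of_int d"
  shows False
proof -
  obtain u v where uv: "quotient_of r = (u, v)" by force
  have v: "0 < v" "v \<le> int m" using r uv quotient_of_denom_pos by (auto simp: farey_def)
  have "r = of_int u / of_int v" using uv quotient_of_div by blast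
  with assms(3,4) have "of_int a / of_int b < (of_int u / of_int v :: rat)"
    "(of_int u / of_int v :: rat) < of_int c / of_int d" by simp_all
  moreover have "0 < b" "0 < d" using br by (auto simp: farey_bracket_def)
  ultimately have "of_int (a * v) < (of_int (u * b) :: rat)" "of_int (u * d) < (of_int (c * v) :: rat)"
    using v by (simp_all add: divide_simps)
  then have "1 \<le> b * u - a * v" "1 \<le> c * v - d * u"
    by (simp_all only: of_int_less_iff) (simp_all add: mult.commute)
  then have "b * 1 + d * 1 \<le> b * (c * v - d * u) + d * (b * u - a * v)"
    using \<open>0 < b\<close> \<open>0 < d\<close> by (intro add_mono mult_left_mono) simp_all
  also have "\<dots> = v * (b * c - a * d)" by (simp add: algebra_simps)
  finally show False using br v by (simp add: farey_bracket_def)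
qed

lemma successive_enclosing_unique:
  fixes A C r s :: rat and S :: "rat set" and \<alpha> :: "'a :: linordered_field"
  assumes "A \<in> S" "C \<in> S" "of_rat A < \<alpha>" "\<alpha> < of_rat C" "\<not> (\<exists>e \<in> S. A < e \<and> e < C)"
    and "r \<in> S" "s \<in> S" "of_rat r < \<alpha>" "\<alpha> < of_rat s" "\<not> (\<exists>e \<in> S. r < e \<and> e < s)"
  shows "r = A \<and> s = C"
proof -
  have "A < s" using assms(3,9) by (metis of_rat_less order.strict_trans)
  have "r < C" using assms(4,8) by (metis of_rat_less order.strict_trans)
  have "r = A"
  proof (rule linorder_cases[of r A])
    assume "r < A" then show ?thesis using \<open>A < s\<close> assms(1,10) by blast
  next
    assume "A < r" then show ?thesis using \<open>r < C\<close> assms(5,6) by blast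
  qed
  moreover have "s = C"
  proof (rule linorder_cases[of s C])
    assume "s < C" then show ?thesis using \<open>A < s\<close> assms(5,7) by blast
  next
    assume "C < s" then show ?thesis using \<open>r < C\<close> assms(2,10) by blast
  qed
  ultimately show ?thesis ..
qed

lemma hurwitz_pair_farey_bracket:
  assumes br: "farey_bracket \<alpha> m a b c d"
  shows "hurwitz_pair \<alpha> m = (of_int a / of_int b, of_int c / of_int d)"
proof -
  define A :: rat where "A = of_int a / of_int b"
  define C :: rat where "C = of_int c / of_int d"
  have in_farey: "A \<in> farey m" "C \<in> farey m"
    using farey_bracket_in_farey[OF br] by (simp_all add: A_def C_def)
  have encl: "of_rat A < \<alpha>" "\<alpha> < of_rat C"
    using br by (simp_all add: A_def C_def of_rat_divide farey_bracket_def divide_simps mult.commute)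
  have gap: "\<not> (\<exists>e \<in> farey m. A < e \<and> e < C)"
    using farey_bracket_no_farey_between[OF br] by (auto simp: A_def C_def)
  have "hurwitz_pair \<alpha> m = (A, C)"
    unfolding hurwitz_pair_def
  proof (rule the_equality)
    fix x assume "case x of (r, s) \<Rightarrow> r \<in> farey m \<and> s \<in> farey m \<and>
      of_rat r < \<alpha> \<and> \<alpha> < of_rat s \<and> \<not> (\<exists>e \<in> farey m. r < e \<and> e < s)"
    then show "x = (A, C)"
      using successive_enclosing_unique[OF in_farey encl gap] by (cases x) (simp, blast)
  qed (use in_farey encl gap in simp)
  then show ?thesis by (simp add: A_def C_def)
qed

lemma xi_eq_iff:
  assumes "\<alpha> \<notin> \<rat>"
  shows "xi \<alpha> w = xi \<alpha> v \<longleftrightarrow> w = v"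
proof
  assume eq: "xi \<alpha> w = xi \<alpha> v"
  then have "of_int (fst w - fst v) * \<alpha> = of_int (snd v - snd w)"
    by (simp add: xi_def algebra_simps)
  moreover have "of_int (fst w - fst v) * \<alpha> \<noteq> of_int (snd v - snd w)" if "fst w \<noteq> fst v"
    using that by (intro of_int_mult_irrational_neq[OF assms]) simp
  ultimately have "fst w = fst v" by blast
  with eq show "w = v" by (simp add: xi_def prod_eq_iff)
qed simp

lemma mink_min_eqI:
  assumes irr: "\<alpha> \<notin> \<rat>" and w: "P w" "sup_norm_le w m" "first_nonzero_pos w"
    and min: "\<And>v. P v \<Longrightarrow> sup_norm_le v m \<Longrightarrow> \<bar>xi \<alpha> w\<bar> \<le> \<bar>xi \<alpha> v\<bar>"
  shows "mink_min \<alpha> m P = w"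
  unfolding mink_min_def
proof (rule the_equality)
  fix w' assume w': "P w' \<and> sup_norm_le w' m \<and> first_nonzero_pos w' \<and>
      (\<forall>v. P v \<and> sup_norm_le v m \<longrightarrow> \<bar>xi \<alpha> w'\<bar> \<le> \<bar>xi \<alpha> v\<bar>)"
  then have "\<bar>xi \<alpha> w'\<bar> = \<bar>xi \<alpha> w\<bar>" using w min by (meson order_antisym)
  then have "xi \<alpha> w' = xi \<alpha> w \<or> xi \<alpha> w' = xi \<alpha> (- fst w, - snd w)"
    by (auto simp: xi_def abs_eq_iff)
  then have "w' = w \<or> w' = (- fst w, - snd w)" by (simp add: xi_eq_iff[OF irr])
  then show "w' = w" using w' w(3) by (auto simp: first_nonzero_pos_def)
qed (use w min in blast)

lemma mink_A_eqI:
  assumes irr: "\<alpha> \<notin> \<rat>"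
    and w1: "w1 \<noteq> (0, 0)" "sup_norm_le w1 m" "first_nonzero_pos w1"
      "\<And>v. v \<noteq> (0, 0) \<Longrightarrow> sup_norm_le v m \<Longrightarrow> \<bar>xi \<alpha> w1\<bar> \<le> \<bar>xi \<alpha> v\<bar>"
    and w2: "fst w1 * snd w2 - snd w1 * fst w2 \<noteq> 0" "sup_norm_le w2 m" "first_nonzero_pos w2"
      "\<And>v. fst w1 * snd v - snd w1 * fst v \<noteq> 0 \<Longrightarrow> sup_norm_le v m \<Longrightarrow> \<bar>xi \<alpha> w2\<bar> \<le> \<bar>xi \<alpha> v\<bar>"
  shows "mink_A \<alpha> m = (w1, w2)"
proof -
  have "mink_w1 \<alpha> m = w1"
    unfolding mink_w1_def using irr w1 by (rule mink_min_eqI)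
  moreover from this have "mink_w2 \<alpha> m = w2"
    unfolding mink_w2_def Let_def using irr w2 by (simp add: mink_min_eqI)
  ultimately show ?thesis by (simp add: mink_A_def)
qed

lemma unimodular_coords:
  fixes a b c d :: "'a :: comm_ring_1"
  assumes "b * c - a * d = 1"
  shows "fst v = b * (c * fst v + d * snd v) - d * (a * fst v + b * snd v)"
    and "snd v = c * (a * fst v + b * snd v) - a * (c * fst v + d * snd v)"
proof -
  have "b * (c * fst v + d * snd v) - d * (a * fst v + b * snd v) = (b * c - a * d) * fst v"
    "c * (a * fst v + b * snd v) - a * (c * fst v + d * snd v) = (b * c - a * d) * snd v"
    by (simp_all add: algebra_simps)
  then show "fst v = b * (c * fst v + d * snd v) - d * (a * fst v + b * snd v)"
    and "snd v = c * (a * fst v + b * snd v) - a * (c * fst v + d * snd v)"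
    using assms by simp_all
qed

lemma unimodular_coords_nonzero:
  fixes a b c d :: "'a :: comm_ring_1"
  assumes "b * c - a * d = 1" and "v \<noteq> (0, 0)"
  shows "c * fst v + d * snd v \<noteq> 0 \<or> a * fst v + b * snd v \<noteq> 0"
  using unimodular_coords[OF assms(1), of v] assms(2) by (auto simp: prod_eq_iff)

text \<open>Here v = x (b, -a) - y (d, -c), so \<xi>(v) = x (b\<alpha> - a) + y (c - d\<alpha>) with both
  weights positive, and x y < 0 would give |fst v| = |xb - yd| \<ge> b + d > m.\<close>
lemma abs_xi_farey_bracket:
  assumes br: "farey_bracket \<alpha> m a b c d" and v: "sup_norm_le v m"
  shows "\<bar>xi \<alpha> v\<bar> = \<bar>of_int (c * fst v + d * snd v)\<bar> * (of_int b * \<alpha> - of_int a)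
           + \<bar>of_int (a * fst v + b * snd v)\<bar> * (of_int c - of_int d * \<alpha>)"
proof -
  define x where "x = c * fst v + d * snd v"
  define y where "y = a * fst v + b * snd v"
  define e where "e = of_int b * \<alpha> - of_int a"
  define f where "f = of_int c - of_int d * \<alpha>"
  have det: "b * c - a * d = 1" using br by (simp add: farey_bracket_def)
  have e: "0 < e" and f: "0 < f" using br by (simp_all add: farey_bracket_def e_def f_def)
  have fst_v: "fst v = b * x - d * y" and snd_v: "snd v = c * y - a * x"
    using unimodular_coords[OF det, of v] by (simp_all add: x_def y_def)
  have "xi \<alpha> v = of_int x * e + of_int y * f"
    by (simp add: xi_def fst_v snd_v e_def f_def algebra_simps)
  have bd: "1 \<le> b" "1 \<le> d" "\<bar>fst v\<bar> < b + d"
    using br v by (auto simp: farey_bracket_def sup_norm_le_def)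
  have "0 \<le> x * y"
  proof (rule ccontr)
    assume "\<not> 0 \<le> x * y"
    then consider "1 \<le> x" "y \<le> -1" | "x \<le> -1" "1 \<le> y" by (auto simp: zero_le_mult_iff)
    then have "b + d \<le> \<bar>b * x - d * y\<bar>"
    proof cases
      case 1
      have "b * 1 \<le> b * x" "d * y \<le> d * -1" using 1 bd by (intro mult_left_mono; simp)+
      then show ?thesis by simp
    next
      case 2
      have "b * x \<le> b * -1" "d * 1 \<le> d * y" using 2 bd by (intro mult_left_mono; simp)+
      then show ?thesis by simp
    qed
    with bd fst_v show False by simp
  qed
  then consider "0 \<le> x" "0 \<le> y" | "x \<le> 0" "y \<le> 0" by (auto simp: zero_le_mult_iff)
  then have "\<bar>of_int x * e + of_int y * f\<bar> = \<bar>of_int x\<bar> * e + \<bar>of_int y\<bar> * f"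
  proof cases
    case 1
    then show ?thesis using e f by simp
  next
    case 2
    then have "of_int x * e \<le> 0" "of_int y * f \<le> 0" using e f by (simp_all add: mult_nonpos_nonneg)
    then show ?thesis using 2 by simp
  qed
  with \<open>xi \<alpha> v = of_int x * e + of_int y * f\<close> show ?thesis
    by (simp add: x_def y_def e_def f_def)
qed

lemma abs_xi_ge_farey_bracket:
  assumes br: "farey_bracket \<alpha> m a b c d" and v: "sup_norm_le v m"
  shows "c * fst v + d * snd v \<noteq> 0 \<Longrightarrow> of_int b * \<alpha> - of_int a \<le> \<bar>xi \<alpha> v\<bar>"
    and "a * fst v + b * snd v \<noteq> 0 \<Longrightarrow> of_int c - of_int d * \<alpha> \<le> \<bar>xi \<alpha> v\<bar>"
proof -
  have e: "0 < of_int b * \<alpha> - of_int a" and f: "0 < of_int c - of_int d * \<alpha>"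
    using br by (simp_all add: farey_bracket_def)
  have one_le: "1 \<le> \<bar>of_int n :: real\<bar>" if "n \<noteq> 0" for n :: int
    using that by linarith
  show "of_int b * \<alpha> - of_int a \<le> \<bar>xi \<alpha> v\<bar>" if "c * fst v + d * snd v \<noteq> 0"
    using abs_xi_farey_bracket[OF br v] mult_right_mono[OF one_le[OF that] less_imp_le[OF e]] f
    by (smt (verit) mult_nonneg_nonneg abs_ge_zero)
  show "of_int c - of_int d * \<alpha> \<le> \<bar>xi \<alpha> v\<bar>" if "a * fst v + b * snd v \<noteq> 0"
    using abs_xi_farey_bracket[OF br v] mult_right_mono[OF one_le[OF that] less_imp_le[OF f]] e
    by (smt (verit) mult_nonneg_nonneg abs_ge_zero)
qed

lemma mink_A_farey_bracket:
  assumes irr: "\<alpha> \<notin> \<rat>" and br: "farey_bracket \<alpha> m a b c d"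
  shows "mink_A \<alpha> m = (if of_int b * \<alpha> - of_int a < of_int c - of_int d * \<alpha>
           then ((b, - a), (d, - c)) else ((d, - c), (b, - a)))"
proof -
  have det: "b * c - a * d = 1" using br by (simp add: farey_bracket_def)
  have xi_b: "\<bar>xi \<alpha> (b, - a)\<bar> = of_int b * \<alpha> - of_int a"
   and xi_d: "\<bar>xi \<alpha> (d, - c)\<bar> = of_int c - of_int d * \<alpha>"
    using br by (simp_all add: farey_bracket_def xi_def)
  have rows: "(b, - a) \<noteq> (0, 0)" "sup_norm_le (b, - a) m" "first_nonzero_pos (b, - a)"
    "(d, - c) \<noteq> (0, 0)" "sup_norm_le (d, - c) m" "first_nonzero_pos (d, - c)"
    using br by (auto simp: farey_bracket_def sup_norm_le_def first_nonzero_pos_def)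
  note ge = abs_xi_ge_farey_bracket[OF br]
  have ge_min: "min \<bar>xi \<alpha> (b, - a)\<bar> \<bar>xi \<alpha> (d, - c)\<bar> \<le> \<bar>xi \<alpha> v\<bar>"
    if "v \<noteq> (0, 0)" "sup_norm_le v m" for v
    using unimodular_coords_nonzero[OF det that(1)] ge[OF that(2)] xi_b xi_d by fastforce
  have indep_b: "a * fst v + b * snd v \<noteq> 0"
    if "fst (b, - a) * snd v - snd (b, - a) * fst v \<noteq> 0" for v
    using that by (simp add: algebra_simps)
  have indep_d: "c * fst v + d * snd v \<noteq> 0"
    if "fst (d, - c) * snd v - snd (d, - c) * fst v \<noteq> 0" for v
    using that by (simp add: algebra_simps)
  show ?thesis
  proof (cases "of_int b * \<alpha> - of_int a < of_int c - of_int d * \<alpha>")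
    case True
    have "mink_A \<alpha> m = ((b, - a), (d, - c))"
    proof (rule mink_A_eqI[OF irr rows(1-3) _ _ rows(5,6)])
      show "\<bar>xi \<alpha> (b, - a)\<bar> \<le> \<bar>xi \<alpha> v\<bar>" if "v \<noteq> (0, 0)" "sup_norm_le v m" for v
        using ge_min[OF that] True xi_b xi_d by simp
      show "\<bar>xi \<alpha> (d, - c)\<bar> \<le> \<bar>xi \<alpha> v\<bar>"
        if "fst (b, - a) * snd v - snd (b, - a) * fst v \<noteq> 0" "sup_norm_le v m" for v
        using ge(2)[OF that(2) indep_b[OF that(1)]] xi_d by simp
    qed (use det in \<open>simp add: algebra_simps\<close>)
    with True show ?thesis by simp
  next
    case False
    have "mink_A \<alpha> m = ((d, - c), (b, - a))"
    proof (rule mink_A_eqI[OF irr rows(4-6) _ _ rows(2,3)])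
      show "\<bar>xi \<alpha> (d, - c)\<bar> \<le> \<bar>xi \<alpha> v\<bar>" if "v \<noteq> (0, 0)" "sup_norm_le v m" for v
        using ge_min[OF that] False xi_b xi_d by simp
      show "\<bar>xi \<alpha> (b, - a)\<bar> \<le> \<bar>xi \<alpha> v\<bar>"
        if "fst (d, - c) * snd v - snd (d, - c) * fst v \<noteq> 0" "sup_norm_le v m" for v
        using ge(1)[OF that(2) indep_d[OF that(1)]] xi_b by simp
    qed (use det in \<open>simp add: algebra_simps\<close>)
    with False show ?thesis by simp
  qed
qed

lemma hurwitz_pair_eq_iff_farey_bracket:
  assumes "farey_bracket \<alpha> m a b c d" and "farey_bracket \<alpha> m' a' b' c' d'"
  shows "hurwitz_pair \<alpha> m = hurwitz_pair \<alpha> m' \<longleftrightarrow> (a, b, c, d) = (a', b', c', d')"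
  using hurwitz_pair_farey_bracket[OF assms(1)] hurwitz_pair_farey_bracket[OF assms(2)]
    farey_bracket_quotient_of[OF assms(1)] farey_bracket_quotient_of[OF assms(2)]
  by (metis prod.inject)

text \<open>Swapping the rows is impossible since it would turn bc - ad = 1 into -1.\<close>
lemma mink_A_eq_iff_farey_bracket:
  assumes "\<alpha> \<notin> \<rat>" and "farey_bracket \<alpha> m a b c d" and "farey_bracket \<alpha> m' a' b' c' d'"
  shows "mink_A \<alpha> m = mink_A \<alpha> m' \<longleftrightarrow> (a, b, c, d) = (a', b', c', d')"
  using mink_A_farey_bracket[OF assms(1,2)] mink_A_farey_bracket[OF assms(1,3)] assms(2,3)
  by (auto simp: farey_bracket_def split: if_splits)

lemma new_indices_cong:
  assumes "\<And>m m'. 1 \<le> m \<Longrightarrow> 1 \<le> m' \<Longrightarrow> f m = f m' \<longleftrightarrow> g m = g m'"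
  shows "new_indices f = new_indices g"
  unfolding new_indices_def using assms by (auto simp: image_iff)

lemma image_subset_new_indices: "f ` {1..} \<subseteq> f ` new_indices f"
proof
  fix y assume "y \<in> f ` {1..}"
  then have ex: "\<exists>j. 1 \<le> j \<and> f j = y" by auto
  define j where "j = (LEAST j. 1 \<le> j \<and> f j = y)"
  have j: "1 \<le> j" "f j = y" using LeastI_ex[OF ex] by (simp_all add: j_def)
  have "f j \<notin> f ` {1..<j}"
  proof
    assume "f j \<in> f ` {1..<j}"
    then obtain i where "1 \<le> i" "i < j" "f i = y" using j by auto
    then show False using Least_le[of "\<lambda>j. 1 \<le> j \<and> f j = y" i] by (simp add: j_def)
  qed
  with j show "y \<in> f ` new_indices f" by (auto simp: new_indices_def)
qed

lemma infinite_new_indices: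
  assumes "infinite (f ` {1..})"
  shows "infinite (new_indices f)"
  using assms finite_surj[OF _ image_subset_new_indices] by blast

lemma new_indices_mink_A_eq_hurwitz_pair:
  assumes "0 < \<alpha>" "\<alpha> < 1" "\<alpha> \<notin> \<rat>"
  shows "new_indices (mink_A \<alpha>) = new_indices (hurwitz_pair \<alpha>)"
proof (rule new_indices_cong)
  fix m m' :: nat assume "1 \<le> m" "1 \<le> m'"
  then obtain a b c d a' b' c' d' where
    "farey_bracket \<alpha> m a b c d" "farey_bracket \<alpha> m' a' b' c' d'"
    using farey_bracket_exists[OF assms] by metis
  then show "mink_A \<alpha> m = mink_A \<alpha> m' \<longleftrightarrow> hurwitz_pair \<alpha> m = hurwitz_pair \<alpha> m'"
    by (simp add: mink_A_eq_iff_farey_bracket[OF assms(3)] hurwitz_pair_eq_iff_farey_bracket)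
qed

text \<open>The denominators of the Hurwitz pair of level m add up to more than m.\<close>
lemma infinite_hurwitz_pairs:
  assumes "0 < \<alpha>" "\<alpha> < 1" "\<alpha> \<notin> \<rat>"
  shows "infinite (hurwitz_pair \<alpha> ` {1..})"
proof
  define den where "den x = snd (quotient_of (fst x)) + snd (quotient_of (snd x))" for x :: "rat \<times> rat"
  assume "finite (hurwitz_pair \<alpha> ` {1..})"
  then have "finite (den ` hurwitz_pair \<alpha> ` {1..})" by simp
  then obtain M where M: "\<And>m. 1 \<le> m \<Longrightarrow> den (hurwitz_pair \<alpha> m) \<le> M"
    by (metis (no_types, lifting) atLeast_iff bdd_above_def bdd_above_finite image_eqI)
  obtain a b c d where br: "farey_bracket \<alpha> (Suc (nat M)) a b c d"
    using farey_bracket_exists[OF assms] by fastforce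
  have "den (hurwitz_pair \<alpha> (Suc (nat M))) = b + d"
    by (simp add: den_def hurwitz_pair_farey_bracket[OF br] farey_bracket_quotient_of[OF br])
  with br M[of "Suc (nat M)"] show False by (auto simp: farey_bracket_def split: if_splits)
qed

theorem theorem1:
  fixes \<alpha> :: real and k :: nat and p q p' q' :: int
  assumes "0 < \<alpha>" and "\<alpha> < 1" and "\<alpha> \<notin> \<rat>"
    and "1 \<le> k"
    and "minkowski_chain \<alpha> k = ((q, - p), (q', - p'))"
  shows "hurwitz_chain \<alpha> k = (of_int p / of_int q, of_int p' / of_int q')
       \<or> hurwitz_chain \<alpha> k = (of_int p' / of_int q', of_int p / of_int q)"
proof -
  define j where "j = enumerate (new_indices (hurwitz_pair \<alpha>)) (k - 1)"
  have "j \<in> new_indices (hurwitz_pair \<alpha>)"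
    unfolding j_def by (rule enumerate_in_set[OF infinite_new_indices[OF infinite_hurwitz_pairs]])
      (use assms in auto)
  then have "1 \<le> j" by (simp add: new_indices_def)
  then obtain a b c d where br: "farey_bracket \<alpha> j a b c d"
    using farey_bracket_exists[OF assms(1-3)] by blast
  have "mink_A \<alpha> j = ((q, - p), (q', - p'))"
    using assms(5) new_indices_mink_A_eq_hurwitz_pair[OF assms(1-3)]
    by (simp add: minkowski_chain_def distinct_chain_def j_def)
  moreover have "hurwitz_chain \<alpha> k = hurwitz_pair \<alpha> j"
    by (simp add: hurwitz_chain_def distinct_chain_def j_def)
  ultimately show ?thesis
    using mink_A_farey_bracket[OF assms(3) br] hurwitz_pair_farey_bracket[OF br]
    by (auto split: if_splits)
qed

end
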